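(* Let $m \ge 0$ be an integer and let $\tau, \tau' \in S_{2m+1}$ be independent uniformly random permutations, each of cycle type $1^1 2^m$ (one fixed point and $m$ two-cycles). Then the probability that $\langle \tau, \tau'\rangle$ is transitive on $\{1,\dots,2m+1\}$ equals \[ \frac{(2m+1)!}{\big((2m+1)!/(2^m m!)\big)^2}. \] Let $m \ge 1$. If $\tau,\tau' \in S_{2m}$ are independent uniformly random with $\tau$ of cycle type $1^2 2^{m-1}$ and $\tau'$ of cycle type $2^m$, then the probability that $\langle\tau,\tau'\rangle$ is transitive equals \[ \frac{(2m)!/2}{\big((2m)!/(2^{m-1}\,2!\,(m-1)!)\big)\cdot\big((2m)!/(2^m m!)\big)}. \] If $\tau,\tau' \in S_{2m}$ are independent uniformly random, both of cycle type $2^m$, then the probability that $\langle\tau,\tau'\rangle$ is transitive equals \[ \frac{(2m-1)!}{\big((2m)!/(2^m m!)\big)^2}. \]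
   Context: Cycle type $1^{d_1}2^{d_2}$ means $d_1$ fixed points and $d_2$ two-cycles. *)

theory Defs
  imports Complex_Main "HOL-Combinatorics.Permutations"
begin

text \<open>Permutations of S of cycle type 1^d1 2^d2: d1 fixed points and d2 two-cycles
  (and no other cycles, i.e. the permutation is an involution).\<close>
definition cycle_type_1_2 :: "nat set \<Rightarrow> nat \<Rightarrow> nat \<Rightarrow> (nat \<Rightarrow> nat) \<Rightarrow> bool" where
  "cycle_type_1_2 S d1 d2 p \<longleftrightarrow>
     p permutes S \<and> (\<forall>x. p (p x) = x) \<and>
     card {x\<in>S. p x = x} = d1 \<and> card {x\<in>S. p x \<noteq> x} = 2 * d2"

definition perms_of_type :: "nat set \<Rightarrow> nat \<Rightarrow> nat \<Rightarrow> (nat \<Rightarrow> nat) set" where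
  "perms_of_type S d1 d2 = {p. cycle_type_1_2 S d1 d2 p}"

inductive_set gen_group :: "(nat \<Rightarrow> nat) \<Rightarrow> (nat \<Rightarrow> nat) \<Rightarrow> (nat \<Rightarrow> nat) set"
  for s t :: "nat \<Rightarrow> nat" where
  gen_id: "id \<in> gen_group s t"
| gen_s: "g \<in> gen_group s t \<Longrightarrow> s \<circ> g \<in> gen_group s t"
| gen_t: "g \<in> gen_group s t \<Longrightarrow> t \<circ> g \<in> gen_group s t"
| gen_s_inv: "g \<in> gen_group s t \<Longrightarrow> inv s \<circ> g \<in> gen_group s t"
| gen_t_inv: "g \<in> gen_group s t \<Longrightarrow> inv t \<circ> g \<in> gen_group s t"

definition transitive_on :: "nat set \<Rightarrow> (nat \<Rightarrow> nat) \<Rightarrow> (nat \<Rightarrow> nat) \<Rightarrow> bool" where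
  "transitive_on S s t \<longleftrightarrow> (\<forall>x\<in>S. \<forall>y\<in>S. \<exists>g\<in>gen_group s t. g x = y)"

definition trans_prob :: "nat set \<Rightarrow> (nat \<Rightarrow> nat) set \<Rightarrow> (nat \<Rightarrow> nat) set \<Rightarrow> real" where
  "trans_prob S A B =
     real (card {(s, t). s \<in> A \<and> t \<in> B \<and> transitive_on S s t}) / real (card (A \<times> B))"

end

theory Submission
  imports Defs "HOL-Combinatorics.Multiset_Permutations"
begin

text \<open>
  Two involutions \<open>s\<close>, \<open>t\<close> generate a transitive group on \<open>S\<close> iff the graph on \<open>S\<close> with
  edges \<open>{x, s x}\<close> and \<open>{x, t x}\<close> is connected. Every vertex has degree at most two and the
  edges alternate between \<open>s\<close> and \<open>t\<close>, so the graph is a single alternating path, or, when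
  neither involution has a fixed point, an alternating cycle of even length. Walking along it
  from a fixed point of \<open>s\<close> (the least one, if there are two), respectively from a chosen point
  of the cycle, lists \<open>S\<close> as \<open>L\<close>, and \<open>t\<close>, \<open>s\<close> are recovered as the involutions pairing
  up consecutive entries of \<open>L\<close> and of \<open>tl L\<close> (respectively \<open>rotate1 L\<close>). So transitive
  pairs correspond to all \<open>(2m+1)!\<close> orderings of \<open>S\<close>, to the \<open>(2m)!/2\<close> orderings whose
  first entry is smaller than the last, and to the \<open>(2m-1)!\<close> orderings starting at a fixed
  point, in the three cases. The denominators count involutions of type \<open>1^d1 2^d2\<close>, which
  number \<open>(d1+2d2)!/(d1! 2^d2 d2!)\<close> by following where a point is sent.
\<close>

section \<open>Groups generated by two involutions\<close>

lemma gen_group_comp: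
  "g \<in> gen_group s t \<Longrightarrow> h \<in> gen_group s t \<Longrightarrow> g \<circ> h \<in> gen_group s t"
  by (induction rule: gen_group.induct) (simp_all add: comp_assoc gen_group.intros)

lemma gen_group_generators: "s \<in> gen_group s t" "t \<in> gen_group s t"
  using gen_group.gen_s[OF gen_group.gen_id] gen_group.gen_t[OF gen_group.gen_id] by simp_all

lemma gen_group_swap: "gen_group t s = gen_group s t"
proof -
  have "g \<in> gen_group s t" if "g \<in> gen_group t s" for g s t
    using that by induction (blast intro: gen_group.intros)+
  then show ?thesis by blast
qed

lemma transitive_on_swap: "transitive_on S t s \<longleftrightarrow> transitive_on S s t"
  by (simp add: transitive_on_def gen_group_swap)

lemma gen_group_involutions_inverse:
  assumes "g \<in> gen_group s t" and s: "\<And>x. s (s x) = x" and t: "\<And>x. t (t x) = x"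
  shows "\<exists>h\<in>gen_group s t. \<forall>z. h (g z) = z"
proof -
  have inv: "inv s = s" "inv t = t" using s t by (metis inv_equality)+
  have step: "\<exists>h\<in>gen_group s t. \<forall>z. h (u (g z)) = z"
    if IH: "\<exists>h\<in>gen_group s t. \<forall>z. h (g z) = z"
      and u: "u \<in> gen_group s t" "\<And>x. u (u x) = x" for u g
  proof -
    obtain h where "h \<in> gen_group s t" "\<forall>z. h (g z) = z" using IH by blast
    then show ?thesis using u by (intro bexI[of _ "h \<circ> u"] gen_group_comp) auto
  qed
  from assms(1) show ?thesis
  proof induction
    case gen_id
    show ?case by (intro bexI[of _ id] gen_group.gen_id) simp
  qed (simp_all add: step gen_group_generators inv s t)
qed

lemma gen_group_image_subset:
  assumes "g \<in> gen_group s t" "\<And>x. s (s x) = x" "\<And>x. t (t x) = x"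
    and "s ` C \<subseteq> C" "t ` C \<subseteq> C"
  shows "g ` C \<subseteq> C"
proof -
  have "inv s = s" "inv t = t" using assms(2,3) by (metis inv_equality)+
  with assms show ?thesis by (induction rule: gen_group.induct) (auto simp: image_subset_iff)
qed

lemma transitive_on_subset_closed:
  assumes "transitive_on S s t" "\<And>x. s (s x) = x" "\<And>x. t (t x) = x"
    and "s ` C \<subseteq> C" "t ` C \<subseteq> C" "x0 \<in> C" "x0 \<in> S"
  shows "S \<subseteq> C"
proof
  fix y assume "y \<in> S"
  then obtain g where "g \<in> gen_group s t" "g x0 = y"
    using assms(1,7) unfolding transitive_on_def by blast
  then show "y \<in> C" using gen_group_image_subset[of g s t C] assms(2-6) by blast
qed

section \<open>Alternating walks\<close>

fun alt_walk :: "('a \<Rightarrow> 'a) \<Rightarrow> ('a \<Rightarrow> 'a) \<Rightarrow> 'a \<Rightarrow> nat \<Rightarrow> 'a" where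
  "alt_walk a b x 0 = x"
| "alt_walk a b x (Suc k) = (if even k then a else b) (alt_walk a b x k)"

lemma alt_walk_in_set: "a permutes S \<Longrightarrow> b permutes S \<Longrightarrow> x \<in> S \<Longrightarrow> alt_walk a b x k \<in> S"
  by (induction k) (auto simp: permutes_in_image)

lemma alt_walk_in_gen_group: "\<exists>g\<in>gen_group a b. g x = alt_walk a b x k"
proof (induction k)
  case 0
  show ?case by (intro bexI[of _ id] gen_group.gen_id) simp
next
  case (Suc k)
  then obtain g where "g \<in> gen_group a b" "g x = alt_walk a b x k" by blast
  then show ?case
    by (intro bexI[of _ "(if even k then a else b) \<circ> g"]) (auto intro: gen_group.intros)
qed

lemma transitive_on_if_alt_walk_covers:
  assumes "\<And>x. a (a x) = x" "\<And>x. b (b x) = x" "S \<subseteq> range (alt_walk a b x0)"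
  shows "transitive_on S a b"
  unfolding transitive_on_def
proof (intro ballI)
  fix x y assume "x \<in> S" "y \<in> S"
  then obtain g h where g: "g \<in> gen_group a b" "g x0 = x" and h: "h \<in> gen_group a b" "h x0 = y"
    using assms(3) alt_walk_in_gen_group by (metis imageE subsetD)
  obtain g' where "g' \<in> gen_group a b" "\<forall>z. g' (g z) = z"
    using gen_group_involutions_inverse[OF g(1) assms(1,2)] by blast
  then show "\<exists>f\<in>gen_group a b. f x = y"
    using g h by (intro bexI[of _ "h \<circ> g'"] gen_group_comp) auto
qed

lemma alt_walk_along_list:
  assumes "L \<noteq> []" and steps: "\<And>k. Suc k < length L \<Longrightarrow> (if even k then a else b) (L ! k) = L ! Suc k"
  shows "map (alt_walk a b (hd L)) [0..<length L] = L"
proof -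
  have "alt_walk a b (hd L) k = L ! k" if "k < length L" for k
    using that by (induction k) (auto simp: hd_conv_nth[OF assms(1)] steps)
  then show ?thesis by (intro nth_equalityI) auto
qed

lemma first_repetition:
  fixes x :: "nat \<Rightarrow> 'a"
  assumes "finite (range x)"
  obtains j where "0 < j" "inj_on x {..<j}" "x j \<in> x ` {..<j}"
proof -
  have repeat: "x q \<in> x ` {..<q}" if "p < q" "x p = x q" for p q
    using that by (metis image_eqI lessThan_iff)
  have "\<not> inj x" using assms finite_imageD infinite_UNIV_nat by blast
  then obtain p q where "p < q" "x p = x q" unfolding inj_def by (metis linorder_neqE_nat)
  then have ex: "\<exists>j. x j \<in> x ` {..<j}" using repeat by blast
  define j where "j = (LEAST j. x j \<in> x ` {..<j})"
  have rep: "x j \<in> x ` {..<j}" unfolding j_def using ex by (rule LeastI_ex)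
  moreover have "inj_on x {..<j}"
  proof (rule inj_onI, rule ccontr)
    fix p q assume pq: "p \<in> {..<j}" "q \<in> {..<j}" "x p = x q" "p \<noteq> q"
    then have "x (max p q) \<in> x ` {..<max p q}" using repeat by (cases "p < q") (auto simp: max_def)
    moreover have "max p q < j" using pq by simp
    ultimately show False using not_less_Least unfolding j_def by blast
  qed
  moreover have "0 < j" using rep by (cases j) auto
  ultimately show thesis using that by blast
qed

lemma alt_walk_first_repeat:
  fixes a b :: "'a \<Rightarrow> 'a" and x0 :: 'a
  defines "x \<equiv> alt_walk a b x0"
  assumes a: "\<And>z. a (a z) = z" and b: "\<And>z. b (b z) = z" and fin: "finite (range x)"
  obtains j where "0 < j" "inj_on x {..<j}" "x j \<in> x ` {..<j}"
    "x j = x (j - 1) \<or> (x j = x0 \<and> even j)"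
proof -
  define step where "step k = (if even k then a else b)" for k :: nat
  have fw: "x (Suc k) = step k (x k)" for k unfolding x_def step_def by simp
  have bw: "step k (x (Suc k)) = x k" for k unfolding x_def step_def using a b by simp
  obtain j where j: "0 < j" "inj_on x {..<j}" "x j \<in> x ` {..<j}"
    using first_repetition[OF fin] by blast
  then obtain i where i: "i < j" "x j = x i" by auto
  obtain j' where j': "j = Suc j'" using j(1) by (cases j) auto
  \<comment> \<open>Stepping back from \<open>x j = x i\<close> by the same involution would give an earlier repetition,
    unless \<open>i = j - 1\<close> or \<open>i = 0\<close> (and then the parities force \<open>j\<close> to be even).\<close>
  have "x j = x (j - 1) \<or> (x j = x0 \<and> even j)"
  proof (cases "i = j'")
    case False
    with i j' have "i < j'" by simp
    show ?thesis
    proof (cases "even i = even j'")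
      case True
      then have "x j' = x (Suc i)" using bw[of j'] fw[of i] i j' unfolding step_def by simp
      moreover have "Suc i \<noteq> j'" using True by auto
      ultimately show ?thesis using inj_onD[OF j(2)] \<open>i < j'\<close> j' by fastforce
    next
      case parity: False
      show ?thesis
      proof (cases i)
        case 0
        then show ?thesis using parity i j' x_def by simp
      next
        case (Suc i')
        then have "x j' = x i'" using bw[of j'] bw[of i'] parity i j' unfolding step_def by simp
        then show ?thesis using inj_onD[OF j(2)] \<open>i < j'\<close> Suc j' by fastforce
      qed
    qed
  qed (use i j' in simp)
  with j show thesis using that by blast
qed

lemma alt_walk_segment_closed:
  fixes a b :: "'a \<Rightarrow> 'a" and x0 :: 'a
  defines "x \<equiv> alt_walk a b x0"
  assumes a: "\<And>z. a (a z) = z" and b: "\<And>z. b (b z) = z"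
    and rep: "x j \<in> x ` {..<j}" and b0: "b x0 \<in> x ` {..<j}"
  shows "a ` x ` {..<j} \<subseteq> x ` {..<j}" "b ` x ` {..<j} \<subseteq> x ` {..<j}"
proof -
  define step where "step k = (if even k then a else b)" for k :: nat
  have fw: "x (Suc k) = step k (x k)" for k unfolding x_def step_def by simp
  have bw: "step k (x (Suc k)) = x k" for k unfolding x_def step_def using a b by simp
  have "a (x k) \<in> x ` {..<j} \<and> b (x k) \<in> x ` {..<j}" if "k < j" for k
  proof -
    have forward: "step k (x k) \<in> x ` {..<j}"
    proof (cases "Suc k = j")
      case True
      then show ?thesis using fw[of k] rep by simp
    next
      case False
      then have "Suc k < j" using that by simp
      then show ?thesis using fw[of k] by (metis imageI lessThan_iff)
    qed
    show ?thesis
    proof (cases k)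
      case 0
      then show ?thesis using forward b0 unfolding step_def x_def by simp
    next
      case (Suc k')
      then have "step k' (x k) \<in> x ` {..<j}" using bw[of k'] that by force
      then show ?thesis using forward Suc unfolding step_def by (auto split: if_splits)
    qed
  qed
  then show "a ` x ` {..<j} \<subseteq> x ` {..<j}" "b ` x ` {..<j} \<subseteq> x ` {..<j}" by auto
qed

lemma alt_walk_segment_eq:
  fixes a b :: "nat \<Rightarrow> nat" and x0 :: nat
  defines "x \<equiv> alt_walk a b x0"
  assumes a: "\<And>z. a (a z) = z" "a permutes S" and b: "\<And>z. b (b z) = z" "b permutes S"
    and "finite S" "x0 \<in> S" "transitive_on S a b"
    and j: "0 < j" "inj_on x {..<j}" "x j \<in> x ` {..<j}" "b x0 \<in> x ` {..<j}"
  shows "x ` {..<j} = S" "j = card S"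
proof -
  have "x ` {..<j} \<subseteq> S" using alt_walk_in_set[OF a(2) b(2) \<open>x0 \<in> S\<close>] unfolding x_def by blast
  moreover have "S \<subseteq> x ` {..<j}"
  proof (rule transitive_on_subset_closed[OF \<open>transitive_on S a b\<close> a(1) b(1) _ _ _ \<open>x0 \<in> S\<close>])
    show "a ` x ` {..<j} \<subseteq> x ` {..<j}" "b ` x ` {..<j} \<subseteq> x ` {..<j}"
      using alt_walk_segment_closed[OF a(1) b(1)] j(3,4) unfolding x_def by blast+
    show "x0 \<in> x ` {..<j}" using \<open>0 < j\<close> unfolding x_def by force
  qed
  ultimately show "x ` {..<j} = S" by blast
  then show "j = card S" using card_image[OF j(2)] by simp
qed

lemma alt_walk_path:
  fixes a b :: "nat \<Rightarrow> nat" and x0 :: nat and S :: "nat set"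
  defines "x \<equiv> alt_walk a b x0" and "n \<equiv> card S"
  assumes a: "\<And>z. a (a z) = z" "a permutes S" and b: "\<And>z. b (b z) = z" "b permutes S"
    and S: "finite S" "x0 \<in> S" "transitive_on S a b" and fixed: "b x0 = x0"
  shows "inj_on x {..<n}" "x ` {..<n} = S" "x n = x (n - 1)"
proof -
  have "finite (range x)"
    using alt_walk_in_set[OF a(2) b(2) S(2)] S(1) unfolding x_def by (meson finite_subset image_subsetI)
  then obtain j where j: "0 < j" "inj_on x {..<j}" "x j \<in> x ` {..<j}"
    and ends: "x j = x (j - 1) \<or> (x j = x0 \<and> even j)"
    using alt_walk_first_repeat[OF a(1) b(1)] unfolding x_def by blast
  have "b x0 \<in> x ` {..<j}" using fixed j(1) unfolding x_def by force
  then have seg: "x ` {..<j} = S" "j = n"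
    using alt_walk_segment_eq[OF a b S j(1) j(2,3)[unfolded x_def]] unfolding x_def n_def by auto
  then show "inj_on x {..<n}" "x ` {..<n} = S" using j(2) by simp_all
  have "\<not> (x j = x0 \<and> even j)"
  proof
    assume closing: "x j = x0 \<and> even j"
    then obtain j' where j': "j = Suc j'" "odd j'" using j(1) by (cases j) auto
    then have "b (x j') = b (x 0)" using closing fixed unfolding x_def by simp
    then have "x j' = x 0" using b(1) by metis
    then have "j' = 0" using inj_onD[OF j(2)] j' by simp
    with j' show False by simp
  qed
  then show "x n = x (n - 1)" using ends seg(2) by auto
qed

lemma alt_walk_cycle:
  fixes a b :: "nat \<Rightarrow> nat" and x0 :: nat and S :: "nat set"
  defines "x \<equiv> alt_walk a b x0" and "n \<equiv> card S"
  assumes a: "\<And>z. a (a z) = z" "a permutes S" and b: "\<And>z. b (b z) = z" "b permutes S"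
    and S: "finite S" "x0 \<in> S" "transitive_on S a b"
    and no_fixed: "\<And>z. z \<in> S \<Longrightarrow> a z \<noteq> z \<and> b z \<noteq> z"
  shows "inj_on x {..<n}" "x ` {..<n} = S" "x n = x0" "even n"
proof -
  have inS: "x k \<in> S" for k using alt_walk_in_set[OF a(2) b(2) S(2)] unfolding x_def .
  then have "finite (range x)" using S(1) by (meson finite_subset image_subsetI)
  then obtain j where j: "0 < j" "inj_on x {..<j}" "x j \<in> x ` {..<j}"
    and ends: "x j = x (j - 1) \<or> (x j = x0 \<and> even j)"
    using alt_walk_first_repeat[OF a(1) b(1)] unfolding x_def by blast
  obtain j' where j': "j = Suc j'" using j(1) by (cases j) auto
  have "x j \<noteq> x j'" using no_fixed[OF inS[of j']] j' unfolding x_def by auto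
  then have closing: "x j = x0" "even j" using ends j' by auto
  then have "b (x j') = x0" using j' unfolding x_def by simp
  then have "b x0 = x j'" using b(1) by metis
  then have "b x0 \<in> x ` {..<j}" using j' by auto
  then have seg: "x ` {..<j} = S" "j = n"
    using alt_walk_segment_eq[OF a b S j(1) j(2,3)[unfolded x_def]] unfolding x_def n_def by auto
  then show "inj_on x {..<n}" "x ` {..<n} = S" "x n = x0" "even n" using j(2) closing by simp_all
qed

section \<open>Pairing up consecutive entries of a list\<close>

lemma involution_permutes:
  assumes "\<And>z. p (p z) = z" "\<And>z. z \<notin> S \<Longrightarrow> p z = z"
  shows "p permutes S"
  unfolding permutes_def
proof (intro conjI allI impI)
  show "\<exists>!x. p x = y" for y by (rule ex1I[of _ "p y"]) (use assms(1) in metis)+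
qed (use assms(2) in blast)

fun pairing :: "'a list \<Rightarrow> 'a \<Rightarrow> 'a" where
  "pairing (x # y # r) = (\<lambda>z. if z = x then y else if z = y then x else pairing r z)"
| "pairing _ = id"

lemma pairing_outside: "z \<notin> set L \<Longrightarrow> pairing L z = z"
  by (induction L rule: pairing.induct) auto

lemma pairing_in_set: "z \<in> set L \<Longrightarrow> pairing L z \<in> set L"
  by (induction L rule: pairing.induct) auto

lemma pairing_involution: "distinct L \<Longrightarrow> pairing L (pairing L z) = z"
  by (induction L rule: pairing.induct) (auto simp: pairing_outside dest: pairing_in_set)

lemma pairing_permutes: "distinct L \<Longrightarrow> pairing L permutes set L"
  by (intro involution_permutes pairing_involution pairing_outside)

lemma pairing_nth:
  "distinct L \<Longrightarrow> k < length L \<Longrightarrow> pairing L (L ! k) =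
     (if even k then (if Suc k < length L then L ! Suc k else L ! k) else L ! (k - 1))"
proof (induction L arbitrary: k rule: pairing.induct)
  case (1 x y r)
  show ?case
  proof (cases k)
    case (Suc k1)
    show ?thesis
    proof (cases k1)
      case (Suc k2)
      with \<open>k = Suc k1\<close> have k: "k = Suc (Suc k2)" by simp
      with "1.prems" have "k2 < length r" "r ! k2 \<noteq> x" "r ! k2 \<noteq> y"
        by (auto dest: nth_mem)
      then show ?thesis using "1.IH"[where k = k2] "1.prems"(1) k by (cases k2) auto
    qed (use "1.prems" \<open>k = Suc k1\<close> in auto)
  qed simp
qed simp_all

lemma pairing_step:
  assumes "distinct L" "even k" "Suc k < length L"
  shows "pairing L (L ! k) = L ! Suc k"
  using pairing_nth[OF assms(1), of k] assms(2,3) by simp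

lemma pairing_eqI:
  assumes inj: "inj_on y {..<l}" and u: "\<And>z. u (u z) = z" "\<And>z. z \<notin> y ` {..<l} \<Longrightarrow> u z = z"
    and steps: "\<And>k. even k \<Longrightarrow> k < l \<Longrightarrow> u (y k) = (if Suc k < l then y (Suc k) else y k)"
  shows "u = pairing (map y [0..<l])"
proof
  fix z
  have distinct: "distinct (map y [0..<l])" using inj by (simp add: distinct_map atLeast0LessThan)
  show "u z = pairing (map y [0..<l]) z"
  proof (cases "z \<in> y ` {..<l}")
    case True
    then obtain k where k: "k < l" "z = y k" by auto
    have "u (y k) = (if even k then (if Suc k < l then y (Suc k) else y k) else y (k - 1))"
    proof (cases "even k")
      case False
      then obtain k' where "k = Suc k'" "even k'" by (cases k) auto
      then show ?thesis using steps[of k'] u(1)[of "y k'"] k by (simp add: Suc_lessD)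
    qed (use steps k in simp)
    then show ?thesis using pairing_nth[OF distinct, of k] k by simp
  next
    case False
    then show ?thesis using u(2) pairing_outside[of z "map y [0..<l]"] by (auto simp: atLeast0LessThan)
  qed
qed

lemma pairing_fixpoints:
  assumes "distinct L"
  shows "{z \<in> set L. pairing L z = z} = (if odd (length L) then {last L} else {})"
proof -
  have fixed_iff: "pairing L (L ! k) = L ! k \<longleftrightarrow> even k \<and> k = length L - 1"
    if "k < length L" for k
    using pairing_nth[OF assms that] that by (cases k) (auto simp: nth_eq_iff_index_eq[OF assms])
  have "z \<in> set L \<and> pairing L z = z \<longleftrightarrow> odd (length L) \<and> z = last L" for z
  proof
    assume "z \<in> set L \<and> pairing L z = z"
    then obtain k where k: "k < length L" "z = L ! k" "pairing L (L ! k) = L ! k"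
      by (auto simp: in_set_conv_nth)
    then have "L \<noteq> []" by auto
    with k fixed_iff show "odd (length L) \<and> z = last L" by (auto simp: last_conv_nth)
  next
    assume z: "odd (length L) \<and> z = last L"
    then have "L \<noteq> []" by auto
    with z show "z \<in> set L \<and> pairing L z = z"
      using fixed_iff[of "length L - 1"] by (auto simp: last_conv_nth)
  qed
  then show ?thesis by auto
qed

lemma distinct_hd_neq_last: "distinct L \<Longrightarrow> 2 \<le> length L \<Longrightarrow> hd L \<noteq> last L"
  by (cases L) (auto simp: last_ConsR dest: last_in_set)

lemma pairing_tl_fixpoints:
  assumes "distinct L" "L \<noteq> []"
  shows "{z \<in> set L. pairing (tl L) z = z} = (if even (length L) then {hd L, last L} else {hd L})"
proof -
  obtain y r where L: "L = y # r" using assms(2) by (cases L) auto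
  with assms(1) have r: "distinct r" "y \<notin> set r" by auto
  have "{z \<in> set L. pairing (tl L) z = z} = insert y {z \<in> set r. pairing r z = z}"
    using L pairing_outside[OF r(2)] by auto
  moreover have "odd (length r) \<Longrightarrow> last r = last L" using L by auto
  ultimately show ?thesis using pairing_fixpoints[OF r(1)] L by simp
qed

lemma alt_walk_pairing_tl:
  assumes "distinct L" "L \<noteq> []"
  shows "map (alt_walk (pairing L) (pairing (tl L)) (hd L)) [0..<length L] = L"
proof (rule alt_walk_along_list[OF assms(2)])
  fix k assume k: "Suc k < length L"
  show "(if even k then pairing L else pairing (tl L)) (L ! k) = L ! Suc k"
  proof (cases "even k")
    case False
    then obtain k' where "k = Suc k'" "even k'" by (cases k) auto
    then show ?thesis
      using pairing_step[of "tl L" k'] k assms(1) by (simp add: nth_tl distinct_tl)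
  qed (use pairing_step[OF assms(1) _ k] in simp)
qed

lemma alt_walk_pairing_rotate1:
  assumes "distinct L" "L \<noteq> []"
  shows "map (alt_walk (pairing L) (pairing (rotate1 L)) (hd L)) [0..<length L] = L"
proof (rule alt_walk_along_list[OF assms(2)])
  fix k assume k: "Suc k < length L"
  show "(if even k then pairing L else pairing (rotate1 L)) (L ! k) = L ! Suc k"
  proof (cases "even k")
    case False
    then obtain k' where "k = Suc k'" "even k'" by (cases k) auto
    then show ?thesis
      using pairing_step[of "rotate1 L" k'] k assms(1) by (simp add: nth_rotate1)
  qed (use pairing_step[OF assms(1) _ k] in simp)
qed

lemma transitive_on_pairing_tl:
  fixes L :: "nat list"
  assumes "distinct L" "L \<noteq> []"
  shows "transitive_on (set L) (pairing (tl L)) (pairing L)"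
proof -
  let ?x = "alt_walk (pairing L) (pairing (tl L)) (hd L)"
  have "set (map ?x [0..<length L]) \<subseteq> range ?x" by auto
  then have cover: "set L \<subseteq> range ?x" by (simp only: alt_walk_pairing_tl[OF assms])
  have "distinct (tl L)" using assms(1) by (rule distinct_tl)
  then have "transitive_on (set L) (pairing L) (pairing (tl L))"
    using transitive_on_if_alt_walk_covers[OF pairing_involution pairing_involution cover] assms(1)
    by blast
  then show ?thesis by (simp only: transitive_on_swap)
qed

lemma transitive_on_pairing_rotate1:
  fixes L :: "nat list"
  assumes "distinct L" "L \<noteq> []"
  shows "transitive_on (set L) (pairing L) (pairing (rotate1 L))"
proof -
  let ?x = "alt_walk (pairing L) (pairing (rotate1 L)) (hd L)"
  have "set (map ?x [0..<length L]) \<subseteq> range ?x" by auto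
  then have cover: "set L \<subseteq> range ?x" by (simp only: alt_walk_pairing_rotate1[OF assms])
  have "distinct (rotate1 L)" using assms(1) by simp
  then show ?thesis
    using transitive_on_if_alt_walk_covers[OF pairing_involution pairing_involution cover] assms(1)
    by blast
qed

section \<open>Involutions of a given cycle type\<close>

lemma perms_of_type_iff:
  assumes "finite S"
  shows "p \<in> perms_of_type S d1 d2 \<longleftrightarrow> (\<forall>x. p (p x) = x) \<and> (\<forall>x. x \<notin> S \<longrightarrow> p x = x)
    \<and> card {x \<in> S. p x = x} = d1 \<and> card S = d1 + 2 * d2"
proof -
  have "{x \<in> S. p x \<noteq> x} = S - {x \<in> S. p x = x}" by auto
  then have "card {x \<in> S. p x \<noteq> x} = card S - card {x \<in> S. p x = x}"
    using assms by (simp add: card_Diff_subset)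
  moreover have "card {x \<in> S. p x = x} \<le> card S" using assms by (simp add: card_mono)
  ultimately show ?thesis
    unfolding perms_of_type_def cycle_type_1_2_def
    by (auto simp: permutes_not_in intro: involution_permutes)
qed

definition involutions_on :: "'a set \<Rightarrow> ('a \<Rightarrow> 'a) set" where
  "involutions_on S = {p. p permutes S \<and> (\<forall>x. p (p x) = x)}"

lemma finite_perms_of_type: "finite S \<Longrightarrow> finite (perms_of_type S d1 d2)"
  by (rule finite_subset[OF _ finite_permutations]) (auto simp: perms_of_type_def cycle_type_1_2_def)

lemma perms_of_type_subset_involutions_on: "perms_of_type S d1 d2 \<subseteq> involutions_on S"
  by (auto simp: perms_of_type_def cycle_type_1_2_def involutions_on_def)

lemma pairing_in_involutions_on: "distinct L \<Longrightarrow> set L \<subseteq> S \<Longrightarrow> pairing L \<in> involutions_on S"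
  using pairing_permutes permutes_subset pairing_involution by (fastforce simp: involutions_on_def)

lemma pairing_in_perms_of_type:
  assumes "distinct L"
  shows "pairing L \<in> perms_of_type (set L) (length L mod 2) (length L div 2)"
  using pairing_fixpoints[OF assms] pairing_involution[OF assms] distinct_card[OF assms]
  by (auto simp: perms_of_type_iff pairing_outside odd_iff_mod_2_eq_one)

lemma pairing_tl_in_perms_of_type:
  assumes "distinct L" "L \<noteq> []"
  shows "pairing (tl L) \<in> perms_of_type (set L) (2 - length L mod 2) ((length L - 1) div 2)"
proof -
  have "2 \<le> length L" if "even (length L)"
    using assms(2) that by (cases "length L") (auto dest: odd_pos)
  then have "hd L \<noteq> last L" if "even (length L)" using assms(1) that distinct_hd_neq_last by blast
  then have "card {z \<in> set L. pairing (tl L) z = z} = 2 - length L mod 2"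
    using pairing_tl_fixpoints[OF assms] by (auto simp: odd_iff_mod_2_eq_one)
  moreover have "length L = 2 - length L mod 2 + 2 * ((length L - 1) div 2)"
    using assms(2) by (cases "length L") (auto, presburger)
  ultimately show ?thesis
    using assms distinct_card[OF assms(1)] distinct_tl[of L] pairing_involution[of "tl L"]
      pairing_outside[of _ "tl L"] list.set_sel(2)[of L]
    by (auto simp: perms_of_type_iff)
qed

lemma perms_of_type_fixing:
  assumes "finite S" "a \<in> S"
  shows "{p \<in> perms_of_type S (Suc d1) d2. p a = a} = perms_of_type (S - {a}) d1 d2"
proof -
  have "card {x \<in> S. p x = x} = Suc (card {x \<in> S - {a}. p x = x})" if "p a = a" for p :: "nat \<Rightarrow> nat"
  proof -
    have "{x \<in> S. p x = x} = insert a {x \<in> S - {a}. p x = x}" using that assms(2) by auto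
    then show ?thesis using assms(1) by simp
  qed
  moreover have "card S = Suc (card (S - {a}))" using assms by (metis card_Suc_Diff1)
  ultimately show ?thesis using assms
    by (auto simp: perms_of_type_iff)
qed

lemma perms_of_type_fixing_empty:
  assumes "finite S" "a \<in> S"
  shows "{p \<in> perms_of_type S 0 d2. p a = a} = {}"
  using assms by (auto simp: perms_of_type_iff)

lemma perms_of_type_moving_empty:
  assumes "finite S" "a \<in> S"
  shows "{p \<in> perms_of_type S d1 0. p a \<noteq> a} = {}"
proof -
  have "{x \<in> S. p x = x} = S" if "card {x \<in> S. p x = x} = card S" for p :: "nat \<Rightarrow> nat"
    using that assms(1) by (intro card_subset_eq) auto
  then show ?thesis using assms by (auto simp: perms_of_type_iff)
qed

lemma perms_of_type_unswap:
  assumes S: "finite S" "a \<in> S" "b \<in> S" "a \<noteq> b"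
    and p: "p \<in> perms_of_type S d1 (Suc d2)" "p a = b"
  shows "p(a := a, b := b) \<in> perms_of_type (S - {a, b}) d1 d2"
proof -
  have inv: "\<And>z. p (p z) = z" "\<And>z. z \<notin> S \<Longrightarrow> p z = z"
    using p(1) by (simp_all add: perms_of_type_iff S(1))
  have "p b = a" using inv(1)[of a] p(2) by simp
  define q where "q = p(a := a, b := b)"
  have other: "q z = p z" "p z \<noteq> a" "p z \<noteq> b" if "z \<noteq> a" "z \<noteq> b" for z
    using that inv(1)[of z] p(2) \<open>p b = a\<close> unfolding q_def by auto
  have "card {a, b} \<le> card S" using S by (intro card_mono) auto
  then have "card S = Suc (Suc (card (S - {a, b})))" using S by (simp add: card_Diff_subset)
  moreover have "q (q z) = z" for z
    by (cases "z = a \<or> z = b") (auto simp: q_def other inv(1))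
  moreover have "q z = z" if "z \<notin> S - {a, b}" for z
    using that inv(2) other(1) by (cases "z = a \<or> z = b") (auto simp: q_def)
  moreover have "{x \<in> S - {a, b}. q x = x} = {x \<in> S. p x = x}"
    using p(2) \<open>p b = a\<close> S(4) other(1) by (auto simp: q_def)
  ultimately show "q \<in> perms_of_type (S - {a, b}) d1 d2"
    using p(1) by (simp add: perms_of_type_iff S(1))
qed

lemma perms_of_type_swap:
  assumes S: "finite S" "a \<in> S" "b \<in> S" "a \<noteq> b"
    and q: "q \<in> perms_of_type (S - {a, b}) d1 d2"
  shows "q(a := b, b := a) \<in> perms_of_type S d1 (Suc d2)"
proof -
  have inv: "\<And>z. q (q z) = z" "\<And>z. z \<notin> S - {a, b} \<Longrightarrow> q z = z"
    using q by (simp_all add: perms_of_type_iff S(1))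
  define p where "p = q(a := b, b := a)"
  have other: "p z = q z" "q z \<noteq> a" "q z \<noteq> b" if "z \<noteq> a" "z \<noteq> b" for z
    using that inv(1)[of z] inv(2)[of a] inv(2)[of b] unfolding p_def by auto
  have "card {a, b} \<le> card S" using S by (intro card_mono) auto
  then have "card S = Suc (Suc (card (S - {a, b})))" using S by (simp add: card_Diff_subset)
  moreover have "p (p z) = z" for z
    by (cases "z = a \<or> z = b") (use S(4) in \<open>auto simp: p_def other inv(1)\<close>)
  moreover have "p z = z" if "z \<notin> S" for z
    using that inv(2) other(1) S(2,3) by (cases "z = a \<or> z = b") (auto simp: p_def)
  moreover have "{x \<in> S. p x = x} = {x \<in> S - {a, b}. q x = x}"
    using S(4) other(1) by (auto simp: p_def)
  ultimately show "p \<in> perms_of_type S d1 (Suc d2)"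
    using q by (simp add: perms_of_type_iff S(1))
qed

lemma card_perms_of_type_swapping:
  assumes S: "finite S" "a \<in> S" "b \<in> S" "a \<noteq> b"
  shows "card {p \<in> perms_of_type S d1 (Suc d2). p a = b} = card (perms_of_type (S - {a, b}) d1 d2)"
proof (rule bij_betw_same_card[of "\<lambda>p. p(a := a, b := b)"],
    rule bij_betw_byWitness[where f' = "\<lambda>q. q(a := b, b := a)"])
  show "(\<lambda>p. p(a := a, b := b)) ` {p \<in> perms_of_type S d1 (Suc d2). p a = b}
    \<subseteq> perms_of_type (S - {a, b}) d1 d2"
    using perms_of_type_unswap[OF S] by blast
  show "(\<lambda>q. q(a := b, b := a)) ` perms_of_type (S - {a, b}) d1 d2
    \<subseteq> {p \<in> perms_of_type S d1 (Suc d2). p a = b}"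
    using perms_of_type_swap[OF S] S(4) by auto
  show "\<forall>p \<in> {p \<in> perms_of_type S d1 (Suc d2). p a = b}. p(a := a, b := b, a := b, b := a) = p"
  proof
    fix p assume "p \<in> {p \<in> perms_of_type S d1 (Suc d2). p a = b}"
    then have "p a = b" "p (p a) = a" using perms_of_type_iff[OF S(1)] by blast+
    then show "p(a := a, b := b, a := b, b := a) = p" by (auto simp: fun_eq_iff)
  qed
  show "\<forall>q \<in> perms_of_type (S - {a, b}) d1 d2. q(a := b, b := a, a := a, b := b) = q"
  proof
    fix q assume "q \<in> perms_of_type (S - {a, b}) d1 d2"
    then have "q a = a" "q b = b" by (simp_all add: perms_of_type_iff S(1))
    then show "q(a := b, b := a, a := a, b := b) = q" by (auto simp: fun_eq_iff)
  qed
qed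

lemma card_perms_of_type_moving:
  assumes "finite S" "a \<in> S"
  shows "card {p \<in> perms_of_type S d1 (Suc d2). p a \<noteq> a}
    = (\<Sum>b\<in>S - {a}. card (perms_of_type (S - {a, b}) d1 d2))"
proof -
  have "p a \<in> S" if "p \<in> perms_of_type S d1 (Suc d2)" for p
    using that assms by (auto simp: perms_of_type_iff)
  then have "{p \<in> perms_of_type S d1 (Suc d2). p a \<noteq> a}
      = (\<Union>b\<in>S - {a}. {p \<in> perms_of_type S d1 (Suc d2). p a = b})"
    by auto
  moreover have "finite (perms_of_type S d1 (Suc d2))" using assms(1) by (rule finite_perms_of_type)
  ultimately have "card {p \<in> perms_of_type S d1 (Suc d2). p a \<noteq> a}
      = (\<Sum>b\<in>S - {a}. card {p \<in> perms_of_type S d1 (Suc d2). p a = b})"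
    using assms(1) by (simp only:) (rule card_UN_disjoint, auto)
  also have "\<dots> = (\<Sum>b\<in>S - {a}. card (perms_of_type (S - {a, b}) d1 d2))"
    using assms by (intro sum.cong refl card_perms_of_type_swapping) auto
  finally show ?thesis .
qed

lemma card_filter_add: "finite A \<Longrightarrow> card {x \<in> A. P x} + card {x \<in> A. \<not> P x} = card A"
  by (subst card_Un_disjoint[symmetric]) (auto intro: arg_cong[where f = card])

lemma card_perms_of_type:
  assumes "finite S" "card S = d1 + 2 * d2"
  shows "card (perms_of_type S d1 d2) * (fact d1 * 2 ^ d2 * fact d2) = fact (d1 + 2 * d2)"
  using assms
proof (induction "d1 + 2 * d2" arbitrary: S d1 d2 rule: less_induct)
  case less
  show ?case
  proof (cases "S = {}")
    case True
    then have "d1 = 0" "d2 = 0" using less.prems by simp_all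
    moreover have "perms_of_type {} 0 0 = {id}" by (auto simp: perms_of_type_iff fun_eq_iff)
    ultimately show ?thesis using True by simp
  next
    case False
    then obtain a where a: "a \<in> S" by blast
    define N where "N = d1 + 2 * d2"
    have "0 < card S" using less.prems(1) False by (simp add: card_gt_0_iff)
    then have N: "card S = N" "0 < N" using less.prems(2) by (simp_all add: N_def)
    define T where "T = perms_of_type S d1 d2"
    define D :: nat where "D = fact d1 * 2 ^ d2 * fact d2"
    have fixing: "card {p \<in> T. p a = a} * D = fact (N - 1) * d1"
    proof (cases d1)
      case (Suc e)
      have "card {p \<in> T. p a = a} = card (perms_of_type (S - {a}) e d2)"
        using perms_of_type_fixing[OF less.prems(1) a] by (simp add: T_def Suc)
      moreover have "card (perms_of_type (S - {a}) e d2) * (fact e * 2 ^ d2 * fact d2) = fact (N - 1)"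
        using less.hyps[of e d2 "S - {a}"] less.prems a N Suc by (simp add: N_def)
      ultimately show ?thesis by (simp add: D_def Suc algebra_simps)
    qed (simp add: T_def perms_of_type_fixing_empty[OF less.prems(1) a])
    have moving: "card {p \<in> T. p a \<noteq> a} * D = fact (N - 1) * (2 * d2)"
    proof (cases d2)
      case (Suc e)
      have "card {p \<in> T. p a \<noteq> a} * (fact d1 * 2 ^ e * fact e)
          = (\<Sum>b\<in>S - {a}. card (perms_of_type (S - {a, b}) d1 e) * (fact d1 * 2 ^ e * fact e))"
        using card_perms_of_type_moving[OF less.prems(1) a] by (simp add: T_def Suc sum_distrib_right)
      also have "\<dots> = (\<Sum>b\<in>S - {a}. fact (N - 2))"
      proof (rule sum.cong[OF refl])
        fix b assume b: "b \<in> S - {a}"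
        have "card {a, b} \<le> card S" using a b less.prems(1) by (intro card_mono) auto
        then have "card (S - {a, b}) = d1 + 2 * e"
          using a b less.prems Suc by (simp add: card_Diff_subset)
        then show "card (perms_of_type (S - {a, b}) d1 e) * (fact d1 * 2 ^ e * fact e) = fact (N - 2)"
          using less.hyps[of d1 e "S - {a, b}"] less.prems(1) Suc by (simp add: N_def)
      qed
      also have "\<dots> = (N - 1) * fact (N - 2)" using less.prems(1) a N by simp
      also have "\<dots> = fact (N - 1)" using N Suc by (simp add: N_def fact_reduce[of "N - 1"])
      finally have "card {p \<in> T. p a \<noteq> a} * (fact d1 * 2 ^ e * fact e) = fact (N - 1)" .
      moreover have "D = fact d1 * 2 ^ e * fact e * (2 * d2)" by (simp add: D_def Suc algebra_simps)
      ultimately show ?thesis by (simp only: mult.assoc[symmetric])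
    qed (simp add: T_def perms_of_type_moving_empty[OF less.prems(1) a])
    have "finite T" unfolding T_def using less.prems(1) by (rule finite_perms_of_type)
    then have "card T = card {p \<in> T. p a = a} + card {p \<in> T. p a \<noteq> a}"
      by (rule card_filter_add[symmetric])
    then have "card T * D = fact (N - 1) * N"
      using fixing moving by (simp add: N_def algebra_simps)
    also have "\<dots> = fact N" using N(2) by (simp add: fact_reduce[of N])
    finally show ?thesis by (simp add: T_def D_def N_def)
  qed
qed

lemma real_card_perms_of_type:
  assumes "finite S" "card S = d1 + 2 * d2"
  shows "real (card (perms_of_type S d1 d2)) = fact (d1 + 2 * d2) / (fact d1 * 2 ^ d2 * fact d2)"
proof -
  have "real (card (perms_of_type S d1 d2)) * (fact d1 * 2 ^ d2 * fact d2) = fact (d1 + 2 * d2)"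
    using arg_cong[OF card_perms_of_type[OF assms], of real] by simp
  then show ?thesis by (simp add: field_simps)
qed

section \<open>Transitive pairs of involutions as paths and cycles\<close>

lemma tl_map_upt: "tl (map x [0..<n]) = map (\<lambda>i. x (Suc i)) [0..<n - 1]"
  by (rule nth_equalityI) (auto simp: nth_tl)

lemma path_decomposition:
  fixes a b :: "nat \<Rightarrow> nat" and x0 :: nat and S :: "nat set"
  defines "L \<equiv> map (alt_walk a b x0) [0..<card S]"
  assumes a: "\<And>z. a (a z) = z" "a permutes S" and b: "\<And>z. b (b z) = z" "b permutes S"
    and S: "finite S" "x0 \<in> S" "transitive_on S a b" and fixed: "b x0 = x0"
  shows "L \<in> permutations_of_set S" "hd L = x0" "a = pairing L" "b = pairing (tl L)"
proof -
  define x where "x = alt_walk a b x0"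
  define n where "n = card S"
  have L: "L = map x [0..<n]" unfolding L_def x_def n_def ..
  have walk: "inj_on x {..<n}" "x ` {..<n} = S" "x n = x (n - 1)"
    using alt_walk_path[OF a b S fixed] unfolding x_def n_def by auto
  have "0 < n" using S n_def card_gt_0_iff by blast
  have fw: "x (Suc k) = (if even k then a else b) (x k)" for k unfolding x_def by simp
  show perm: "L \<in> permutations_of_set S"
    using walk(1,2) by (simp add: L permutations_of_set_def distinct_map atLeast0LessThan)
  show "hd L = x0" using \<open>0 < n\<close> by (simp add: L hd_map x_def)
  show "a = pairing L" unfolding L
  proof (rule pairing_eqI[OF walk(1) a(1)])
    show "a z = z" if "z \<notin> x ` {..<n}" for z using that walk(2) permutes_not_in[OF a(2)] by auto
    show "a (x k) = (if Suc k < n then x (Suc k) else x k)" if "even k" "k < n" for k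
    proof (cases "Suc k < n")
      case False
      then have "n = Suc k" using that(2) by simp
      then show ?thesis using fw[of k] walk(3) that(1) by simp
    qed (use fw[of k] that(1) in simp)
  qed
  show "b = pairing (tl L)" unfolding L tl_map_upt
  proof (rule pairing_eqI[OF _ b(1)])
    have "distinct (tl L)" using perm by (simp add: permutations_of_set_def distinct_tl)
    then show "inj_on (\<lambda>i. x (Suc i)) {..<n - 1}"
      by (simp add: L tl_map_upt distinct_map atLeast0LessThan)
    have "S = insert (x 0) ((\<lambda>i. x (Suc i)) ` {..<n - 1})"
      using walk(2) \<open>0 < n\<close> lessThan_Suc_eq_insert_0[of "n - 1"] by (simp add: image_image)
    then show "b z = z" if "z \<notin> (\<lambda>i. x (Suc i)) ` {..<n - 1}" for z
      using that permutes_not_in[OF b(2)] fixed unfolding x_def by (cases "z \<in> S") auto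
    show "b (x (Suc k)) = (if Suc k < n - 1 then x (Suc (Suc k)) else x (Suc k))"
      if "even k" "k < n - 1" for k
    proof (cases "Suc k < n - 1")
      case False
      then have "n = Suc (Suc k)" using that(2) by simp
      then show ?thesis using fw[of "Suc k"] walk(3) that(1) by simp
    qed (use fw[of "Suc k"] that(1) in simp)
  qed
qed

lemma cycle_decomposition:
  fixes a b :: "nat \<Rightarrow> nat" and x0 :: nat and S :: "nat set"
  defines "L \<equiv> map (alt_walk a b x0) [0..<card S]"
  assumes a: "\<And>z. a (a z) = z" "a permutes S" and b: "\<And>z. b (b z) = z" "b permutes S"
    and S: "finite S" "x0 \<in> S" "transitive_on S a b"
    and no_fixed: "\<And>z. z \<in> S \<Longrightarrow> a z \<noteq> z \<and> b z \<noteq> z"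
  shows "L \<in> permutations_of_set S" "hd L = x0" "a = pairing L" "b = pairing (rotate1 L)"
proof -
  define x where "x = alt_walk a b x0"
  define n where "n = card S"
  have L: "L = map x [0..<n]" unfolding L_def x_def n_def ..
  have walk: "inj_on x {..<n}" "x ` {..<n} = S" "x n = x0" "even n"
    using alt_walk_cycle[OF a b S no_fixed] unfolding x_def n_def by auto
  have "0 < n" using S n_def card_gt_0_iff by blast
  have fw: "x (Suc k) = (if even k then a else b) (x k)" for k unfolding x_def by simp
  have inner: "Suc k < n" if "even k" "k < n" for k using that walk(4) by (metis Suc_lessI even_Suc)
  show perm: "L \<in> permutations_of_set S"
    using walk(1,2) by (simp add: L permutations_of_set_def distinct_map atLeast0LessThan)
  show "hd L = x0" using \<open>0 < n\<close> by (simp add: L hd_map x_def)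
  show "a = pairing L" unfolding L
  proof (rule pairing_eqI[OF walk(1) a(1)])
    show "a z = z" if "z \<notin> x ` {..<n}" for z using that walk(2) permutes_not_in[OF a(2)] by auto
    show "a (x k) = (if Suc k < n then x (Suc k) else x k)" if "even k" "k < n" for k
      using fw[of k] inner that by simp
  qed
  have rotate: "rotate1 L = map (\<lambda>i. x (Suc i)) [0..<n]"
  proof (rule nth_equalityI)
    show "rotate1 L ! i = map (\<lambda>i. x (Suc i)) [0..<n] ! i" if "i < length (rotate1 L)" for i
      using that walk(3) by (cases "Suc i = n") (auto simp: L nth_rotate1 x_def)
  qed (simp add: L)
  show "b = pairing (rotate1 L)" unfolding rotate
  proof (rule pairing_eqI[OF _ b(1)])
    have "distinct (rotate1 L)" "set (rotate1 L) = S" using perm by (auto simp: permutations_of_set_def)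
    then show "inj_on (\<lambda>i. x (Suc i)) {..<n}"
      by (simp add: rotate distinct_map atLeast0LessThan)
    show "b z = z" if "z \<notin> (\<lambda>i. x (Suc i)) ` {..<n}" for z
      using that permutes_not_in[OF b(2)] \<open>set (rotate1 L) = S\<close>
      by (auto simp: rotate atLeast0LessThan)
    show "b (x (Suc k)) = (if Suc k < n then x (Suc (Suc k)) else x (Suc k))"
      if "even k" "k < n" for k
      using fw[of "Suc k"] inner that by simp
  qed
qed

definition path_pairs :: "nat set \<Rightarrow> ((nat \<Rightarrow> nat) \<times> (nat \<Rightarrow> nat)) set" where
  "path_pairs S = {(s, t). s \<in> involutions_on S \<and> t \<in> involutions_on S \<and> transitive_on S s t
     \<and> (\<exists>x\<in>S. s x = x)}"

definition cycle_pairs :: "nat set \<Rightarrow> ((nat \<Rightarrow> nat) \<times> (nat \<Rightarrow> nat)) set" where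
  "cycle_pairs S = {(s, t). s \<in> involutions_on S \<and> t \<in> involutions_on S \<and> transitive_on S s t
     \<and> (\<forall>x\<in>S. s x \<noteq> x \<and> t x \<noteq> x)}"

lemma permutations_of_set_nonemptyD:
  "L \<in> permutations_of_set S \<Longrightarrow> finite S \<Longrightarrow> S \<noteq> {} \<Longrightarrow>
     distinct L \<and> set L = S \<and> length L = card S \<and> L \<noteq> []"
  by (auto simp: permutations_of_set_def distinct_card)

text \<open>If \<open>s\<close> has two fixed points, the path can be read from either end; starting at the
  smaller one makes the list unique.\<close>

lemma bij_betw_path_pairs:
  assumes S: "finite S" "S \<noteq> {}"
  shows "bij_betw (\<lambda>L. (pairing (tl L), pairing L))
    {L \<in> permutations_of_set S. hd L = Min {z \<in> S. pairing (tl L) z = z}} (path_pairs S)"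
proof -
  define \<psi> where "\<psi> p = map (alt_walk (snd p) (fst p) (Min {z \<in> S. fst p z = z})) [0..<card S]"
    for p :: "(nat \<Rightarrow> nat) \<times> (nat \<Rightarrow> nat)"
  have to_pairs: "(pairing (tl L), pairing L) \<in> path_pairs S"
    and walk_back: "\<psi> (pairing (tl L), pairing L) = L"
    if L: "L \<in> permutations_of_set S" "hd L = Min {z \<in> S. pairing (tl L) z = z}" for L
  proof -
    have L': "distinct L" "set L = S" "length L = card S" "L \<noteq> []"
      using permutations_of_set_nonemptyD[OF L(1) S] by auto
    have "hd L \<in> S" "pairing (tl L) (hd L) = hd L"
      using L' by (auto intro: pairing_outside simp: neq_Nil_conv)
    moreover have "set (tl L) \<subseteq> S" using L' by (auto dest: list.set_sel(2))
    ultimately show "(pairing (tl L), pairing L) \<in> path_pairs S"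
      using transitive_on_pairing_tl[OF L'(1,4)] L'
      by (auto simp: path_pairs_def intro!: pairing_in_involutions_on distinct_tl)
    show "\<psi> (pairing (tl L), pairing L) = L"
      using alt_walk_pairing_tl[OF L'(1,4)] L' L(2) by (simp add: \<psi>_def)
  qed
  have from_pairs: "\<psi> p \<in> {L \<in> permutations_of_set S. hd L = Min {z \<in> S. pairing (tl L) z = z}}
      \<and> (pairing (tl (\<psi> p)), pairing (\<psi> p)) = p" if "p \<in> path_pairs S" for p
  proof -
    obtain s t where p: "p = (s, t)" by (cases p)
    with that have s: "\<And>z. s (s z) = z" "s permutes S" and t: "\<And>z. t (t z) = z" "t permutes S"
      and tr: "transitive_on S t s" and "\<exists>x\<in>S. s x = x"
      by (auto simp: path_pairs_def involutions_on_def transitive_on_swap)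
    define x0 where "x0 = Min {z \<in> S. s z = z}"
    then have x0: "x0 \<in> S" "s x0 = x0" using Min_in[of "{z \<in> S. s z = z}"] S \<open>\<exists>x\<in>S. s x = x\<close> by auto
    have L: "\<psi> p = map (alt_walk t s x0) [0..<card S]" by (simp add: \<psi>_def p x0_def)
    note decomposition = path_decomposition[OF t s S(1) x0(1) tr x0(2), folded L]
    have "pairing (tl (\<psi> p)) = s" "pairing (\<psi> p) = t" using decomposition(3,4) by simp_all
    then show ?thesis using decomposition(1,2) x0_def p by simp
  qed
  show ?thesis
    by (rule bij_betw_byWitness[where f' = \<psi>]) (use to_pairs walk_back from_pairs in blast)+
qed

lemma bij_betw_cycle_pairs:
  assumes S: "finite S" "x0 \<in> S" "even (card S)"
  shows "bij_betw (\<lambda>L. (pairing L, pairing (rotate1 L)))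
    {L \<in> permutations_of_set S. hd L = x0} (cycle_pairs S)"
proof -
  define \<psi> where "\<psi> p = map (alt_walk (fst p) (snd p) x0) [0..<card S]"
    for p :: "(nat \<Rightarrow> nat) \<times> (nat \<Rightarrow> nat)"
  have to_pairs: "(pairing L, pairing (rotate1 L)) \<in> cycle_pairs S"
    and walk_back: "\<psi> (pairing L, pairing (rotate1 L)) = L"
    if L: "L \<in> permutations_of_set S" "hd L = x0" for L
  proof -
    have L': "distinct L" "set L = S" "length L = card S" "L \<noteq> []"
      using permutations_of_set_nonemptyD[OF L(1) S(1)] S(2) by auto
    have "{z \<in> set L. pairing L z = z} = {}" "{z \<in> set L. pairing (rotate1 L) z = z} = {}"
      using pairing_fixpoints[of L] pairing_fixpoints[of "rotate1 L"] L' S(3) by simp_all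
    then have "\<forall>x\<in>S. pairing L x \<noteq> x \<and> pairing (rotate1 L) x \<noteq> x" using L' by auto
    then show "(pairing L, pairing (rotate1 L)) \<in> cycle_pairs S"
      using transitive_on_pairing_rotate1[OF L'(1,4)] L'
      by (auto simp: cycle_pairs_def intro!: pairing_in_involutions_on)
    show "\<psi> (pairing L, pairing (rotate1 L)) = L"
      using alt_walk_pairing_rotate1[OF L'(1,4)] L' L(2) by (simp add: \<psi>_def)
  qed
  have from_pairs: "\<psi> p \<in> {L \<in> permutations_of_set S. hd L = x0}
      \<and> (pairing (\<psi> p), pairing (rotate1 (\<psi> p))) = p" if "p \<in> cycle_pairs S" for p
  proof -
    obtain s t where p: "p = (s, t)" by (cases p)
    with that have s: "\<And>z. s (s z) = z" "s permutes S" and t: "\<And>z. t (t z) = z" "t permutes S"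
      and tr: "transitive_on S s t" and no_fixed: "\<And>z. z \<in> S \<Longrightarrow> s z \<noteq> z \<and> t z \<noteq> z"
      by (auto simp: cycle_pairs_def involutions_on_def)
    have L: "\<psi> p = map (alt_walk s t x0) [0..<card S]" by (simp add: \<psi>_def p)
    note decomposition = cycle_decomposition[OF s t S(1,2) tr no_fixed, folded L]
    have "pairing (\<psi> p) = s" "pairing (rotate1 (\<psi> p)) = t" using decomposition(3,4) by simp_all
    then show ?thesis using decomposition(1,2) p by simp
  qed
  show ?thesis
    by (rule bij_betw_byWitness[where f' = \<psi>]) (use to_pairs walk_back from_pairs in blast)+
qed

lemma path_pairs_eq:
  assumes S: "finite S" "S \<noteq> {}"
  shows "{(s, t). s \<in> perms_of_type S (2 - card S mod 2) ((card S - 1) div 2)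
      \<and> t \<in> perms_of_type S (card S mod 2) (card S div 2) \<and> transitive_on S s t} = path_pairs S"
    (is "?T = _")
proof
  show "path_pairs S \<subseteq> ?T"
  proof clarify
    fix s t assume "(s, t) \<in> path_pairs S"
    then have "(s, t) \<in> (\<lambda>L. (pairing (tl L), pairing L)) `
        {L \<in> permutations_of_set S. hd L = Min {z \<in> S. pairing (tl L) z = z}}"
      using bij_betw_imp_surj_on[OF bij_betw_path_pairs[OF S]] by simp
    then obtain L where L: "L \<in> permutations_of_set S" "s = pairing (tl L)" "t = pairing L"
      by blast
    then have L': "distinct L" "set L = S" "length L = card S" "L \<noteq> []"
      using permutations_of_set_nonemptyD[OF L(1) S] by auto
    show "s \<in> perms_of_type S (2 - card S mod 2) ((card S - 1) div 2)
      \<and> t \<in> perms_of_type S (card S mod 2) (card S div 2) \<and> transitive_on S s t"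
      using pairing_tl_in_perms_of_type[OF L'(1,4)] pairing_in_perms_of_type[OF L'(1)]
        transitive_on_pairing_tl[OF L'(1,4)] L L' by simp
  qed
  show "?T \<subseteq> path_pairs S"
  proof clarify
    fix s t assume st: "s \<in> perms_of_type S (2 - card S mod 2) ((card S - 1) div 2)"
      "t \<in> perms_of_type S (card S mod 2) (card S div 2)" "transitive_on S s t"
    then have "card {x \<in> S. s x = x} \<noteq> 0" by (simp add: perms_of_type_iff[OF S(1)])
    then have "\<exists>x\<in>S. s x = x" by (metis (mono_tags, lifting) card.empty Collect_empty_eq)
    then show "(s, t) \<in> path_pairs S"
      using st perms_of_type_subset_involutions_on[THEN subsetD] by (auto simp: path_pairs_def)
  qed
qed

lemma cycle_pairs_eq:
  assumes S: "finite S" "S \<noteq> {}" "even (card S)"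
  shows "{(s, t). s \<in> perms_of_type S 0 (card S div 2) \<and> t \<in> perms_of_type S 0 (card S div 2)
      \<and> transitive_on S s t} = cycle_pairs S"
    (is "?T = _")
proof
  obtain x0 where "x0 \<in> S" using S(2) by blast
  show "cycle_pairs S \<subseteq> ?T"
  proof clarify
    fix s t assume "(s, t) \<in> cycle_pairs S"
    then have "(s, t) \<in> (\<lambda>L. (pairing L, pairing (rotate1 L))) `
        {L \<in> permutations_of_set S. hd L = x0}"
      using bij_betw_imp_surj_on[OF bij_betw_cycle_pairs[OF S(1) \<open>x0 \<in> S\<close> S(3)]] by simp
    then obtain L where L: "L \<in> permutations_of_set S" "s = pairing L" "t = pairing (rotate1 L)"
      by blast
    then have L': "distinct L" "set L = S" "length L = card S" "L \<noteq> []"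
      using permutations_of_set_nonemptyD[OF L(1) S(1,2)] by auto
    show "s \<in> perms_of_type S 0 (card S div 2) \<and> t \<in> perms_of_type S 0 (card S div 2)
      \<and> transitive_on S s t"
      using pairing_in_perms_of_type[of L] pairing_in_perms_of_type[of "rotate1 L"]
        transitive_on_pairing_rotate1[OF L'(1,4)] L L' S(3) by simp
  qed
  show "?T \<subseteq> cycle_pairs S"
  proof clarify
    fix s t assume st: "s \<in> perms_of_type S 0 (card S div 2)"
      "t \<in> perms_of_type S 0 (card S div 2)" "transitive_on S s t"
    then have "card {x \<in> S. s x = x} = 0" "card {x \<in> S. t x = x} = 0"
      by (simp_all add: perms_of_type_iff[OF S(1)])
    then have "\<forall>x\<in>S. s x \<noteq> x \<and> t x \<noteq> x" using S(1) by auto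
    then show "(s, t) \<in> cycle_pairs S"
      using st perms_of_type_subset_involutions_on[THEN subsetD] by (auto simp: cycle_pairs_def)
  qed
qed

lemma card_permutations_of_set_hd:
  assumes "finite S" "x0 \<in> S"
  shows "card {L \<in> permutations_of_set S. hd L = x0} = fact (card S - 1)"
proof -
  have "{L \<in> permutations_of_set S. hd L = x0} = (\<lambda>L. x0 # L) ` permutations_of_set (S - {x0})"
  proof (intro set_eqI iffI)
    fix L assume L: "L \<in> {L \<in> permutations_of_set S. hd L = x0}"
    then have "L \<noteq> []" using assms(2) by (auto simp: permutations_of_set_def)
    with L obtain r where r: "L = x0 # r" by (cases L) auto
    with L have "distinct (x0 # r)" "set (x0 # r) = S" by (simp_all add: permutations_of_set_def)
    then have "r \<in> permutations_of_set (S - {x0})" by (auto simp: permutations_of_set_def)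
    then show "L \<in> (\<lambda>L. x0 # L) ` permutations_of_set (S - {x0})" by (simp add: r)
  next
    fix L assume "L \<in> (\<lambda>L. x0 # L) ` permutations_of_set (S - {x0})"
    then obtain r where "L = x0 # r" "r \<in> permutations_of_set (S - {x0})" by blast
    then show "L \<in> {L \<in> permutations_of_set S. hd L = x0}"
      using assms(2) by (auto simp: permutations_of_set_def)
  qed
  then show ?thesis
    using assms by (simp add: card_image)
qed

lemma card_permutations_of_set_hd_less_last:
  fixes S :: "'a :: linorder set"
  assumes "finite S" "2 \<le> card S"
  shows "2 * card {L \<in> permutations_of_set S. hd L < last L} = fact (card S)"
proof -
  define A where "A = {L \<in> permutations_of_set S. hd L < last L}"
  define B where "B = {L \<in> permutations_of_set S. last L < hd L}"
  have "hd L \<noteq> last L" if "L \<in> permutations_of_set S" for L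
    using that assms by (intro distinct_hd_neq_last) (auto simp: permutations_of_set_def distinct_card)
  then have split: "permutations_of_set S = A \<union> B" by (auto simp: A_def B_def neq_iff)
  have "L \<noteq> []" if "L \<in> permutations_of_set S" for L
    using that assms by (auto simp: permutations_of_set_def)
  then have rev_iff: "L \<in> B \<longleftrightarrow> rev L \<in> A" for L
    by (auto simp: A_def B_def permutations_of_set_def hd_rev last_rev)
  have "B = rev ` A"
  proof (intro set_eqI iffI)
    show "L \<in> rev ` A" if "L \<in> B" for L
      using that rev_iff[of L] by (intro image_eqI[of _ rev "rev L"]) simp_all
    show "L \<in> B" if "L \<in> rev ` A" for L
      using that rev_iff by force
  qed
  then have "card B = card A" by (simp add: card_image)
  moreover have "finite A" "finite B" using split finite_permutations_of_set[of S] by simp_all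
  moreover have "A \<inter> B = {}" by (auto simp: A_def B_def)
  ultimately have "card (permutations_of_set S) = 2 * card A"
    using split card_Un_disjoint[of A B] by simp
  then show ?thesis using card_permutations_of_set[OF assms(1)] by (simp add: A_def)
qed

lemma path_lists_odd:
  assumes "finite S" "odd (card S)"
  shows "{L \<in> permutations_of_set S. hd L = Min {z \<in> S. pairing (tl L) z = z}} = permutations_of_set S"
proof -
  have "S \<noteq> {}" using assms(2) by auto
  have "hd L = Min {z \<in> S. pairing (tl L) z = z}" if "L \<in> permutations_of_set S" for L
  proof -
    have L: "distinct L" "set L = S" "length L = card S" "L \<noteq> []"
      using permutations_of_set_nonemptyD[OF that assms(1) \<open>S \<noteq> {}\<close>] by auto
    then show ?thesis using pairing_tl_fixpoints[OF L(1,4)] assms(2) by simp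
  qed
  then show ?thesis by blast
qed

lemma path_lists_even:
  assumes "finite S" "even (card S)" "S \<noteq> {}"
  shows "{L \<in> permutations_of_set S. hd L = Min {z \<in> S. pairing (tl L) z = z}}
    = {L \<in> permutations_of_set S. hd L < last L}"
proof -
  have "hd L = Min {z \<in> S. pairing (tl L) z = z} \<longleftrightarrow> hd L < last L"
    if "L \<in> permutations_of_set S" for L
  proof -
    have L: "distinct L" "set L = S" "length L = card S" "L \<noteq> []"
      using permutations_of_set_nonemptyD[OF that assms(1,3)] by auto
    have "2 \<le> length L" using assms(2) L(3,4) by (cases "length L") (auto dest: odd_pos)
    then have "hd L \<noteq> last L" by (rule distinct_hd_neq_last[OF L(1)])
    moreover have "Min {z \<in> S. pairing (tl L) z = z} = min (hd L) (last L)"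
      using pairing_tl_fixpoints[OF L(1,4)] L assms(2) by simp
    ultimately show ?thesis by (simp add: min_def less_le)
  qed
  then show ?thesis by (intro Collect_cong) blast
qed

lemma card_transitive_pairs_one_fixed_point:
  assumes "finite S" "card S = 2 * m + 1"
  shows "card {(s, t). s \<in> perms_of_type S 1 m \<and> t \<in> perms_of_type S 1 m \<and> transitive_on S s t}
    = fact (2 * m + 1)"
proof -
  have "S \<noteq> {}" "odd (card S)" using assms(2) by auto
  then have "{(s, t). s \<in> perms_of_type S 1 m \<and> t \<in> perms_of_type S 1 m \<and> transitive_on S s t}
      = path_pairs S"
    using path_pairs_eq[OF assms(1)] assms(2) by simp
  then show ?thesis
    using bij_betw_same_card[OF bij_betw_path_pairs[OF assms(1) \<open>S \<noteq> {}\<close>]]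
      path_lists_odd[OF assms(1) \<open>odd (card S)\<close>] card_permutations_of_set[OF assms(1)] assms(2)
    by simp
qed

lemma card_transitive_pairs_two_and_no_fixed_points:
  assumes "finite S" "card S = 2 * m" "1 \<le> m"
  shows "2 * card {(s, t). s \<in> perms_of_type S 2 (m - 1) \<and> t \<in> perms_of_type S 0 m
    \<and> transitive_on S s t} = fact (2 * m)"
proof -
  have "S \<noteq> {}" "even (card S)" "(2 * m - 1) div 2 = m - 1" using assms(2,3) by auto
  then have "{(s, t). s \<in> perms_of_type S 2 (m - 1) \<and> t \<in> perms_of_type S 0 m \<and> transitive_on S s t}
      = path_pairs S"
    using path_pairs_eq[OF assms(1)] assms(2) by simp
  then show ?thesis
    using bij_betw_same_card[OF bij_betw_path_pairs[OF assms(1) \<open>S \<noteq> {}\<close>]]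
      path_lists_even[OF assms(1) \<open>even (card S)\<close> \<open>S \<noteq> {}\<close>]
      card_permutations_of_set_hd_less_last[OF assms(1)] assms(2,3)
    by simp
qed

lemma card_transitive_pairs_no_fixed_points:
  assumes "finite S" "card S = 2 * m" "1 \<le> m"
  shows "card {(s, t). s \<in> perms_of_type S 0 m \<and> t \<in> perms_of_type S 0 m \<and> transitive_on S s t}
    = fact (2 * m - 1)"
proof -
  have "S \<noteq> {}" "even (card S)" using assms(2,3) by auto
  then obtain x0 where "x0 \<in> S" by blast
  have "{(s, t). s \<in> perms_of_type S 0 m \<and> t \<in> perms_of_type S 0 m \<and> transitive_on S s t}
      = cycle_pairs S"
    using cycle_pairs_eq[OF assms(1) \<open>S \<noteq> {}\<close> \<open>even (card S)\<close>] assms(2) by simp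
  then show ?thesis
    using bij_betw_same_card[OF bij_betw_cycle_pairs[OF assms(1) \<open>x0 \<in> S\<close> \<open>even (card S)\<close>]]
      card_permutations_of_set_hd[OF assms(1) \<open>x0 \<in> S\<close>] assms(2)
    by simp
qed

lemma trans_prob_one_fixed_point:
  assumes "finite S" "card S = 2 * m + 1"
  shows "trans_prob S (perms_of_type S 1 m) (perms_of_type S 1 m)
    = fact (2 * m + 1) / (fact (2 * m + 1) / (2 ^ m * fact m))^2"
  using real_card_perms_of_type[of S 1 m] card_transitive_pairs_one_fixed_point[OF assms] assms
  by (simp add: trans_prob_def card_cartesian_product power2_eq_square del: fact_Suc)

lemma trans_prob_two_and_no_fixed_points:
  assumes "finite S" "card S = 2 * m" "1 \<le> m"
  shows "trans_prob S (perms_of_type S 2 (m - 1)) (perms_of_type S 0 m)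
    = (fact (2 * m) / 2) /
      ((fact (2 * m) / (2 ^ (m - 1) * fact 2 * fact (m - 1))) * (fact (2 * m) / (2 ^ m * fact m)))"
proof -
  have "real (2 * card {(s, t). s \<in> perms_of_type S 2 (m - 1) \<and> t \<in> perms_of_type S 0 m
      \<and> transitive_on S s t}) = fact (2 * m)"
    using card_transitive_pairs_two_and_no_fixed_points[OF assms] by (simp only: of_nat_fact)
  then have pairs: "real (card {(s, t). s \<in> perms_of_type S 2 (m - 1) \<and> t \<in> perms_of_type S 0 m
      \<and> transitive_on S s t}) = fact (2 * m) / 2"
    by simp
  have "card S = 2 + 2 * (m - 1)" "2 + 2 * (m - 1) = 2 * m" using assms(2,3) by simp_all
  then have two_fixed: "real (card (perms_of_type S 2 (m - 1)))
      = fact (2 * m) / (2 ^ (m - 1) * fact 2 * fact (m - 1))"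
    using real_card_perms_of_type[OF assms(1)] by (simp add: mult_ac del: fact_Suc)
  have no_fixed: "real (card (perms_of_type S 0 m)) = fact (2 * m) / (2 ^ m * fact m)"
    using real_card_perms_of_type[of S 0 m] assms by simp
  show ?thesis
    unfolding trans_prob_def card_cartesian_product of_nat_mult pairs two_fixed no_fixed ..
qed

lemma trans_prob_no_fixed_points:
  assumes "finite S" "card S = 2 * m" "1 \<le> m"
  shows "trans_prob S (perms_of_type S 0 m) (perms_of_type S 0 m)
    = fact (2 * m - 1) / (fact (2 * m) / (2 ^ m * fact m))^2"
  using real_card_perms_of_type[of S 0 m] card_transitive_pairs_no_fixed_points[OF assms] assms
  by (simp add: trans_prob_def card_cartesian_product power2_eq_square del: fact_Suc)

theorem mainTheorem2:
  fixes m :: nat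
  shows "trans_prob {1..2*m+1} (perms_of_type {1..2*m+1} 1 m) (perms_of_type {1..2*m+1} 1 m)
           = fact (2*m+1) / (fact (2*m+1) / (2^m * fact m))^2
       \<and> (m \<ge> 1 \<longrightarrow>
         trans_prob {1..2*m} (perms_of_type {1..2*m} 2 (m-1)) (perms_of_type {1..2*m} 0 m)
           = (fact (2*m) / 2) /
             ((fact (2*m) / (2^(m-1) * fact 2 * fact (m-1))) * (fact (2*m) / (2^m * fact m))))
       \<and> (m \<ge> 1 \<longrightarrow>
         trans_prob {1..2*m} (perms_of_type {1..2*m} 0 m) (perms_of_type {1..2*m} 0 m)
           = fact (2*m-1) / (fact (2*m) / (2^m * fact m))^2)"
  using trans_prob_one_fixed_point[of "{1..2*m+1}" m]
    trans_prob_two_and_no_fixed_points[of "{1..2*m}" m]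
    trans_prob_no_fixed_points[of "{1..2*m}" m]
  by simp

end
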